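(* Let $I$ be a finite set, $\tau$ a total order of $I$, and $A=(A_1,\dots,A_\ell)$, $B$ set compositions of $I$ with $B$ refining $A$. Then $$\Big(\mathrm{Resf}^{\mathrm{UT}(\tau|_{A_1})}_{\mathrm{UL}(\tau|_{A_1},B|_{A_1})}\otimes\cdots\otimes\mathrm{Resf}^{\mathrm{UT}(\tau|_{A_\ell})}_{\mathrm{UL}(\tau|_{A_\ell},B|_{A_\ell})}\Big)\circ\mathrm{Resf}^{\mathrm{UT}(\tau)}_{\mathrm{UL}(\tau,A)}=\mathrm{Resf}^{\mathrm{UT}(\tau)}_{\mathrm{UL}(\tau,B)}$$ as maps $\mathsf{cf}(\mathrm{UT}(\tau))\to\mathsf{cf}(\mathrm{UL}(\tau,B))$.
   Context: Fix the finite field $\mathbb{F}_q$. For a finite set $I$, $\mathrm{GL}(I)$ is the group of invertible $I\times I$ matrices over $\mathbb{F}_q$ with identity $1_I$. A total order $\tau$ of $I$ is a reflexive, antisymmetric, transitive, total relation $\tau\subseteq I\times I$; $\tau|_J=\tau\cap(J\times J)$. For a relation $\pi$ containing the diagonal, $\mathrm{UT}(\pi)=\{X\in\mathrm{GL}(I):(X-1_I)_{i,j}\ne0\text{ only if }(i,j)\in\pi\}$. A set composition $A=(A_1,\dots,A_\ell)$ of $I$ is a sequence of pairwise disjoint nonempty sets with union $I$; for $J\subseteq I$, $C|_J$ is $(C_1\cap J,\dots)$ with empty sets removed; $B$ refines $A$ if $B=B|_{A_1}\cdots B|_{A_\ell}$ (concatenation). $\mathrm{Asc}(A)=\bigsqcup_{r<s}A_r\times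 A_s$, $\mathrm{Eq}(A)=\bigsqcup_rA_r\times A_r$. $\mathrm{UL}(\tau,A)=\mathrm{UT}(\tau\cap\mathrm{Eq}(A))$, $\mathrm{UR}(\tau,A)=\mathrm{UT}(\{(i,i)\}\cup(\tau\cap\mathrm{Asc}(A)))$, $\mathrm{UP}(\tau,A)=\mathrm{UT}(\tau\cap(\mathrm{Eq}(A)\cup\mathrm{Asc}(A)))=\mathrm{UL}(\tau,A)\ltimes\mathrm{UR}(\tau,A)$. Since $\mathrm{UL}(\tau,A)=\mathrm{UT}(\tau|_{A_1})\oplus\cdots\oplus\mathrm{UT}(\tau|_{A_\ell})$ (block diagonal), $\mathsf{cf}(\mathrm{UL}(\tau,A))$ is identified with $\bigotimes_r\mathsf{cf}(\mathrm{UT}(\tau|_{A_r}))$; similarly $\mathrm{UL}(\tau,B)=\bigoplus_r\mathrm{UL}(\tau|_{A_r},B|_{A_r})$. Here $\mathsf{cf}(G)$ denotes complex class functions on $G$, and $\mathrm{Resf}^{\mathrm{UT}(\tau)}_{\mathrm{UL}(\tau,A)}=\mathrm{Def}^{\mathrm{UP}(\tau,A)}_{\mathrm{UL}(\tau,A)}\circ\mathrm{Res}^{\mathrm{UT}(\tau)}_{\mathrm{UP}(\tau,A)}$, where $\mathrm{Res}$ is restriction and deflation is $\mathrm{Def}^{\mathrm{UP}(\tau,A)}_{\mathrm{UL}(\tau,A)}\psi(g)=\frac{1}{|\mathrm{UR}(\tau,A)|}\sum_{x\in\mathrm{UR}(\tau,A)}\psi(gx)$ for $g\in\mathrm{UL}(\tau,A)$.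 *)

theory Defs
  imports Complex_Main
begin

text \<open>Matrices indexed by a finite set I over a finite field 'f are modelled as
functions 'i => 'i => 'f that vanish outside I x I.\<close>

type_synonym ('i,'f) mat = "'i \<Rightarrow> 'i \<Rightarrow> 'f"

definition mat_on :: "'i set \<Rightarrow> ('i,'f::zero) mat \<Rightarrow> bool" where
  "mat_on I X \<longleftrightarrow> (\<forall>i j. (i,j) \<notin> I \<times> I \<longrightarrow> X i j = 0)"

definition one_mat :: "'i set \<Rightarrow> ('i,'f::{zero,one}) mat" where
  "one_mat I = (\<lambda>i j. if i \<in> I \<and> i = j then 1 else 0)"

definition mmul :: "'i set \<Rightarrow> ('i,'f::comm_semiring_1) mat \<Rightarrow> ('i,'f) mat \<Rightarrow> ('i,'f) mat" where
  "mmul I X Y = (\<lambda>i j. \<Sum>k\<in>I. X i k * Y k j)"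

definition GL :: "'i set \<Rightarrow> ('i,'f::field) mat set" where
  "GL I = {X. mat_on I X \<and> (\<exists>Y. mat_on I Y \<and> mmul I X Y = one_mat I \<and> mmul I Y X = one_mat I)}"

definition total_order_of :: "'i set \<Rightarrow> ('i \<times> 'i) set \<Rightarrow> bool" where
  "total_order_of I \<tau> \<longleftrightarrow> \<tau> \<subseteq> I \<times> I \<and> (\<forall>i\<in>I. (i,i) \<in> \<tau>)
     \<and> (\<forall>i j. (i,j) \<in> \<tau> \<and> (j,i) \<in> \<tau> \<longrightarrow> i = j)
     \<and> (\<forall>i j k. (i,j) \<in> \<tau> \<and> (j,k) \<in> \<tau> \<longrightarrow> (i,k) \<in> \<tau>)
     \<and> (\<forall>i\<in>I. \<forall>j\<in>I. (i,j) \<in> \<tau> \<or> (j,i) \<in> \<tau>)"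

definition rel_restr :: "('i \<times> 'i) set \<Rightarrow> 'i set \<Rightarrow> ('i \<times> 'i) set" where
  "rel_restr \<tau> J = \<tau> \<inter> (J \<times> J)"

definition UT :: "'i set \<Rightarrow> ('i \<times> 'i) set \<Rightarrow> ('i,'f::field) mat set" where
  "UT I \<pi> = {X \<in> GL I. \<forall>i j. (X i j - one_mat I i j) \<noteq> 0 \<longrightarrow> (i,j) \<in> \<pi>}"

definition set_composition :: "'i set \<Rightarrow> 'i set list \<Rightarrow> bool" where
  "set_composition I A \<longleftrightarrow> (\<forall>r < length A. A ! r \<noteq> {})
     \<and> (\<forall>r s. r < s \<and> s < length A \<longrightarrow> A ! r \<inter> A ! s = {})
     \<and> \<Union>(set A) = I"

definition comp_restr :: "'i set list \<Rightarrow> 'i set \<Rightarrow> 'i set list" where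
  "comp_restr C J = filter (\<lambda>X. X \<noteq> {}) (map (\<lambda>X. X \<inter> J) C)"

definition refines :: "'i set list \<Rightarrow> 'i set list \<Rightarrow> bool" where
  "refines B A \<longleftrightarrow> B = concat (map (comp_restr B) A)"

definition Asc :: "'i set list \<Rightarrow> ('i \<times> 'i) set" where
  "Asc A = {(i,j). \<exists>r s. r < s \<and> s < length A \<and> i \<in> A ! r \<and> j \<in> A ! s}"

definition Eq :: "'i set list \<Rightarrow> ('i \<times> 'i) set" where
  "Eq A = {(i,j). \<exists>r < length A. i \<in> A ! r \<and> j \<in> A ! r}"

definition UL :: "'i set \<Rightarrow> ('i \<times> 'i) set \<Rightarrow> 'i set list \<Rightarrow> ('i,'f::field) mat set" where
  "UL I \<tau> A = UT I (\<tau> \<inter> Eq A)"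

definition UR :: "'i set \<Rightarrow> ('i \<times> 'i) set \<Rightarrow> 'i set list \<Rightarrow> ('i,'f::field) mat set" where
  "UR I \<tau> A = UT I (Id_on I \<union> (\<tau> \<inter> Asc A))"

definition UP :: "'i set \<Rightarrow> ('i \<times> 'i) set \<Rightarrow> 'i set list \<Rightarrow> ('i,'f::field) mat set" where
  "UP I \<tau> A = UT I (\<tau> \<inter> (Eq A \<union> Asc A))"

definition class_fun :: "'i set \<Rightarrow> ('i,'f::field) mat set \<Rightarrow> (('i,'f) mat \<Rightarrow> complex) \<Rightarrow> bool" where
  "class_fun I G \<psi> \<longleftrightarrow> (\<forall>g\<in>G. \<forall>x\<in>G. \<forall>y\<in>G. mmul I x y = one_mat I \<longrightarrow>
       \<psi> (mmul I (mmul I x g) y) = \<psi> g)"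

definition Res :: "('i,'f) mat set \<Rightarrow> (('i,'f) mat \<Rightarrow> complex) \<Rightarrow> (('i,'f) mat \<Rightarrow> complex)" where
  "Res H \<psi> = (\<lambda>g. if g \<in> H then \<psi> g else 0)"

definition Deflate :: "'i set \<Rightarrow> ('i \<times> 'i) set \<Rightarrow> 'i set list
    \<Rightarrow> (('i,'f::{field,finite}) mat \<Rightarrow> complex) \<Rightarrow> (('i,'f) mat \<Rightarrow> complex)" where
  "Deflate I \<tau> A \<psi> = (\<lambda>g. (1 / of_nat (card (UR I \<tau> A :: ('i,'f) mat set))) * (\<Sum>x\<in>UR I \<tau> A. \<psi> (mmul I g x)))"

definition Resf :: "'i set \<Rightarrow> ('i \<times> 'i) set \<Rightarrow> 'i set list
    \<Rightarrow> (('i,'f::{field,finite}) mat \<Rightarrow> complex) \<Rightarrow> (('i,'f) mat \<Rightarrow> complex)" where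
  "Resf I \<tau> A = Deflate I \<tau> A \<circ> Res (UP I \<tau> A)"

text \<open>Tensor products of maps: cf(UL(tau,A)) = tensor of cf(UT(tau|A_r)) is realised by
viewing functions on block-diagonal matrices as functions of the diagonal blocks.
A map F on functions of matrices over J acts in the block J: freeze all other blocks.\<close>
definition blk_apply :: "'i set \<Rightarrow> ((('i,'f::zero) mat \<Rightarrow> complex) \<Rightarrow> (('i,'f) mat \<Rightarrow> complex))
    \<Rightarrow> (('i,'f) mat \<Rightarrow> complex) \<Rightarrow> (('i,'f) mat \<Rightarrow> complex)" where
  "blk_apply J F \<psi> = (\<lambda>h. F (\<lambda>g. \<psi> (\<lambda>i j. if i \<in> J \<and> j \<in> J then g i j else h i j))
                            (\<lambda>i j. if i \<in> J \<and> j \<in> J then h i j else 0))"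

definition tensor_maps :: "('i set \<times> ((('i,'f::zero) mat \<Rightarrow> complex) \<Rightarrow> (('i,'f) mat \<Rightarrow> complex))) list
    \<Rightarrow> (('i,'f) mat \<Rightarrow> complex) \<Rightarrow> (('i,'f) mat \<Rightarrow> complex)" where
  "tensor_maps Fs = foldr (\<lambda>(J,F) acc. blk_apply J F \<circ> acc) Fs id"

end

theory Submission
  imports Defs
begin

text \<open>On UP(\<tau>,C), Resf to UL(\<tau>,C) is the average of the right translates by UR(\<tau>,C).
  For h in UL(\<tau>,B), the tensor product of the blockwise maps therefore averages over the
  product of the groups UR(\<tau>|A_r, B|A_r), which is UR(\<tau>,B) \<inter> UL(\<tau>,A), and the left-hand
  side at h becomes an iterated average of \<psi>(h X Y) over X in UR(\<tau>,B) \<inter> UL(\<tau>,A) and Y in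
  UR(\<tau>,A). Every element of UR(\<tau>,B) is such a product X Y, with X its A-block diagonal part,
  so the iterated average is the average over UR(\<tau>,B), which is the right-hand side.\<close>

section \<open>Matrices indexed by a finite set\<close>

lemma mat_onD: "mat_on I X \<Longrightarrow> i \<notin> I \<or> j \<notin> I \<Longrightarrow> X i j = 0"
  by (auto simp: mat_on_def)

lemma mat_on_one_mat: "mat_on I (one_mat I)"
  by (auto simp: mat_on_def one_mat_def)

lemma mat_on_mmul: "mat_on I X \<Longrightarrow> mat_on I Y \<Longrightarrow> mat_on I (mmul I X Y)"
  unfolding mat_on_def mmul_def by (auto intro!: sum.neutral)

lemma mmul_assoc: "mmul I (mmul I X Y) Z = mmul I X (mmul I Y Z)"
proof (intro ext)
  fix i j
  have "mmul I (mmul I X Y) Z i j = (\<Sum>k\<in>I. \<Sum>l\<in>I. X i l * Y l k * Z k j)"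
    by (simp add: mmul_def sum_distrib_right)
  also have "\<dots> = (\<Sum>l\<in>I. \<Sum>k\<in>I. X i l * Y l k * Z k j)"
    by (rule sum.swap)
  also have "\<dots> = mmul I X (mmul I Y Z) i j"
    by (simp add: mmul_def sum_distrib_left mult.assoc)
  finally show "mmul I (mmul I X Y) Z i j = mmul I X (mmul I Y Z) i j" .
qed

lemma mmul_eq_right_if_row_one:
  assumes "finite I" "mat_on I Y" "\<And>k. X i k = one_mat I i k"
  shows "mmul I X Y i j = Y i j"
proof -
  have "mmul I X Y i j = (\<Sum>k\<in>I. if k = i then Y i j else 0)"
    unfolding mmul_def using assms(3) by (intro sum.cong) (auto simp: one_mat_def)
  then show ?thesis
    using assms(1,2) by (simp add: mat_onD)
qed

lemma mmul_eq_left_if_col_one: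
  assumes "finite I" "mat_on I X" "\<And>k. Y k j = one_mat I k j"
  shows "mmul I X Y i j = X i j"
proof -
  have "mmul I X Y i j = (\<Sum>k\<in>I. if k = j then X i j else 0)"
    unfolding mmul_def using assms(3) by (intro sum.cong) (auto simp: one_mat_def)
  then show ?thesis
    using assms(1,2) by (simp add: mat_onD)
qed

lemma mmul_one_mat_left: "finite I \<Longrightarrow> mat_on I Y \<Longrightarrow> mmul I (one_mat I) Y = Y"
  by (intro ext mmul_eq_right_if_row_one) auto

lemma mmul_one_mat_right: "finite I \<Longrightarrow> mat_on I X \<Longrightarrow> mmul I X (one_mat I) = X"
  by (intro ext mmul_eq_left_if_col_one) auto

lemma GL_imp_mat_on: "X \<in> GL I \<Longrightarrow> mat_on I X"
  by (simp add: GL_def)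

lemma GL_inverse:
  "X \<in> GL I \<Longrightarrow> \<exists>Y. mat_on I Y \<and> mmul I X Y = one_mat I \<and> mmul I Y X = one_mat I"
  by (simp add: GL_def)

lemma one_mat_in_GL: "finite I \<Longrightarrow> one_mat I \<in> GL I"
  unfolding GL_def using mat_on_one_mat mmul_one_mat_left[OF _ mat_on_one_mat] by blast

lemma mmul_in_GL:
  assumes "finite I" "X \<in> GL I" "Y \<in> GL I"
  shows "mmul I X Y \<in> GL I"
proof -
  obtain X' where X': "mat_on I X'" "mmul I X X' = one_mat I" "mmul I X' X = one_mat I"
    using GL_inverse[OF assms(2)] by blast
  obtain Y' where Y': "mat_on I Y'" "mmul I Y Y' = one_mat I" "mmul I Y' Y = one_mat I"
    using GL_inverse[OF assms(3)] by blast
  have XY: "mat_on I X" "mat_on I Y"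
    using assms(2,3) by (auto simp: GL_imp_mat_on)
  have "mmul I (mmul I X Y) (mmul I Y' X') = mmul I X (mmul I (mmul I Y Y') X')"
    by (simp add: mmul_assoc)
  also have "\<dots> = one_mat I"
    using X' Y' assms(1) by (simp add: mmul_one_mat_left)
  finally have right: "mmul I (mmul I X Y) (mmul I Y' X') = one_mat I" .
  have "mmul I (mmul I Y' X') (mmul I X Y) = mmul I Y' (mmul I (mmul I X' X) Y)"
    by (simp add: mmul_assoc)
  also have "\<dots> = one_mat I"
    using X' Y' XY assms(1) by (simp add: mmul_one_mat_left)
  finally have left: "mmul I (mmul I Y' X') (mmul I X Y) = one_mat I" .
  show ?thesis
    unfolding GL_def using mat_on_mmul[OF XY] mat_on_mmul[OF Y'(1) X'(1)] left right by blast
qed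

lemma GL_mmul_cancel_right:
  assumes "finite I" "S \<in> GL I" "mat_on I X" "mat_on I Y" "mmul I X S = mmul I Y S"
  shows "X = Y"
proof -
  obtain T where T: "mmul I S T = one_mat I"
    using GL_inverse[OF assms(2)] by blast
  have "mmul I X (mmul I S T) = mmul I Y (mmul I S T)"
    using assms(5) by (simp flip: mmul_assoc)
  then show ?thesis
    using T assms(1,3,4) by (simp add: mmul_one_mat_right)
qed

lemma GL_mmul_cancel_left:
  assumes "finite I" "S \<in> GL I" "mat_on I X" "mat_on I Y" "mmul I S X = mmul I S Y"
  shows "X = Y"
proof -
  obtain T where T: "mmul I T S = one_mat I"
    using GL_inverse[OF assms(2)] by blast
  have "mmul I (mmul I T S) X = mmul I (mmul I T S) Y"
    using assms(5) by (simp add: mmul_assoc)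
  then show ?thesis
    using T assms(1,3,4) by (simp add: mmul_one_mat_left)
qed

lemma finite_mat_on:
  assumes "finite I"
  shows "finite {X :: ('i,'f::{finite,zero}) mat. mat_on I X}"
proof -
  let ?F = "{f :: 'i \<times> 'i \<Rightarrow> 'f. \<forall>x. (x \<in> I \<times> I \<longrightarrow> f x \<in> UNIV) \<and> (x \<notin> I \<times> I \<longrightarrow> f x = 0)}"
  have "finite ?F"
    by (rule finite_set_of_finite_funs) (use assms in auto)
  moreover have "{X. mat_on I X} \<subseteq> curry ` ?F"
  proof
    fix X :: "('i,'f) mat"
    assume "X \<in> {X. mat_on I X}"
    then have "case_prod X \<in> ?F"
      by (auto simp: mat_on_def)
    then show "X \<in> curry ` ?F"
      using image_eqI[of X curry "case_prod X" ?F] by simp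
  qed
  ultimately show ?thesis
    by (meson finite_imageI finite_subset)
qed

lemma finite_GL: "finite I \<Longrightarrow> finite (GL I :: ('i,'f::{field,finite}) mat set)"
  by (rule finite_subset[OF _ finite_mat_on]) (auto simp: GL_def)

lemma UT_iff: "X \<in> UT I \<pi> \<longleftrightarrow> X \<in> GL I \<and> (\<forall>i j. (i,j) \<notin> \<pi> \<longrightarrow> X i j = one_mat I i j)"
  unfolding UT_def by auto

lemma UT_imp_GL: "X \<in> UT I \<pi> \<Longrightarrow> X \<in> GL I"
  by (simp add: UT_def)

lemma UT_imp_mat_on: "X \<in> UT I \<pi> \<Longrightarrow> mat_on I X"
  by (simp add: UT_def GL_def)

lemma UT_entry: "X \<in> UT I \<pi> \<Longrightarrow> (i,j) \<notin> \<pi> \<Longrightarrow> X i j = one_mat I i j"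
  by (simp add: UT_iff)

lemma UT_entry_nonzero:
  assumes "X \<in> UT I \<pi>" "Id_on I \<subseteq> \<pi>" "X i j \<noteq> 0"
  shows "(i,j) \<in> \<pi>"
proof (rule ccontr)
  assume "(i,j) \<notin> \<pi>"
  with assms show False
    using UT_entry[OF assms(1), of i j] by (auto simp: one_mat_def split: if_splits)
qed

lemma UT_mono: "\<pi> \<subseteq> \<pi>' \<Longrightarrow> UT I \<pi> \<subseteq> UT I \<pi>'"
  unfolding UT_def by auto

lemma one_mat_in_UT: "finite I \<Longrightarrow> one_mat I \<in> UT I \<pi>"
  unfolding UT_def using one_mat_in_GL by auto

lemma UT_empty: "finite I \<Longrightarrow> UT I {} = {one_mat I}"
  using one_mat_in_UT by (fastforce simp: UT_iff)

lemma mmul_in_UT: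
  assumes "finite I" "trans \<pi>" "X \<in> UT I \<pi>" "Y \<in> UT I \<pi>"
  shows "mmul I X Y \<in> UT I \<pi>"
  unfolding UT_iff
proof (intro conjI allI impI)
  show "mmul I X Y \<in> GL I"
    using mmul_in_GL[OF assms(1) UT_imp_GL[OF assms(3)] UT_imp_GL[OF assms(4)]] .
  fix i j
  assume ij: "(i,j) \<notin> \<pi>"
  txt \<open>By transitivity no k has both (i,k) and (k,j) in \<pi>, so the (i,j) entry is computed
    as for the identity matrices.\<close>
  have "X i k * Y k j = one_mat I i k * one_mat I k j" for k
  proof (cases "(i,k) \<in> \<pi>")
    case True
    then have "(k,j) \<notin> \<pi>" "k \<noteq> j"
      using assms(2) ij by (auto dest: transD)
    then show ?thesis
      using UT_entry[OF assms(4)] by (simp add: one_mat_def)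
  next
    case False
    then show ?thesis
      using UT_entry[OF assms(3)] UT_entry[OF assms(4)] ij by (cases "(k,j) \<in> \<pi>") (auto simp: one_mat_def)
  qed
  then have "mmul I X Y i j = mmul I (one_mat I) (one_mat I) i j"
    by (simp add: mmul_def)
  also have "\<dots> = one_mat I i j"
    by (simp add: mmul_one_mat_left[OF assms(1) mat_on_one_mat])
  finally show "mmul I X Y i j = one_mat I i j" .
qed

section \<open>Finite matrix groups and averages\<close>

definition mat_group :: "'i set \<Rightarrow> ('i,'f::field) mat set \<Rightarrow> bool" where
  "mat_group I S \<longleftrightarrow> finite S \<and> S \<subseteq> GL I \<and> one_mat I \<in> S \<and> (\<forall>X\<in>S. \<forall>Y\<in>S. mmul I X Y \<in> S)"

lemma mat_groupD:
  assumes "mat_group I S"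
  shows "finite S" "S \<subseteq> GL I" "one_mat I \<in> S" "X \<in> S \<Longrightarrow> Y \<in> S \<Longrightarrow> mmul I X Y \<in> S"
  using assms by (simp_all add: mat_group_def)

lemma mat_group_UT:
  assumes "finite I" "trans \<pi>"
  shows "mat_group I (UT I \<pi> :: ('i,'f::{field,finite}) mat set)"
proof -
  have "UT I \<pi> \<subseteq> (GL I :: ('i,'f) mat set)"
    using UT_imp_GL by blast
  then show ?thesis
    unfolding mat_group_def
    using finite_subset[OF _ finite_GL] assms one_mat_in_UT mmul_in_UT by auto
qed

lemma mat_group_mmul_left_bij:
  assumes "finite I" "mat_group I S" "X \<in> S"
  shows "bij_betw (mmul I X) S S"
proof -
  have "S \<subseteq> GL I" "finite S" "mmul I X ` S \<subseteq> S"
    using mat_groupD[OF assms(2)] assms(3) by auto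
  moreover have "inj_on (mmul I X) S"
    by (rule inj_onI, rule GL_mmul_cancel_left[OF assms(1)])
      (use \<open>S \<subseteq> GL I\<close> assms(3) GL_imp_mat_on in auto)
  ultimately show ?thesis
    by (simp add: bij_betw_def endo_inj_surj)
qed

lemma mat_group_mmul_right_bij:
  assumes "finite I" "mat_group I S" "X \<in> S"
  shows "bij_betw (\<lambda>Y. mmul I Y X) S S"
proof -
  have "S \<subseteq> GL I" "finite S" "(\<lambda>Y. mmul I Y X) ` S \<subseteq> S"
    using mat_groupD[OF assms(2)] assms(3) by auto
  moreover have "inj_on (\<lambda>Y. mmul I Y X) S"
    by (rule inj_onI, rule GL_mmul_cancel_right[OF assms(1)])
      (use \<open>S \<subseteq> GL I\<close> assms(3) GL_imp_mat_on in auto)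
  ultimately show ?thesis
    by (simp add: bij_betw_def endo_inj_surj)
qed

lemma mat_group_inverse:
  assumes "finite I" "mat_group I S" "X \<in> S"
  obtains Y where "Y \<in> S" "mmul I X Y = one_mat I" "mmul I Y X = one_mat I"
proof -
  have S: "S \<subseteq> GL I" "one_mat I \<in> S"
    using mat_groupD[OF assms(2)] by auto
  then have "one_mat I \<in> mmul I X ` S"
    using bij_betw_imp_surj_on[OF mat_group_mmul_left_bij[OF assms]] by simp
  then obtain Y where Y: "Y \<in> S" "mmul I X Y = one_mat I"
    by (metis imageE)
  obtain T where T: "mat_on I T" "mmul I T X = one_mat I"
    using GL_inverse[of X I] S(1) assms(3) by blast
  have "T = mmul I T (mmul I X Y)"
    using Y(2) mmul_one_mat_right[OF assms(1) T(1)] by simp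
  also have "\<dots> = mmul I (mmul I T X) Y"
    by (simp only: mmul_assoc)
  also have "\<dots> = Y"
    using T(2) mmul_one_mat_left[OF assms(1) GL_imp_mat_on[of Y I]] S(1) Y(1) by auto
  finally show ?thesis
    using that[OF Y] T(2) by simp
qed

definition average :: "'a set \<Rightarrow> ('a \<Rightarrow> complex) \<Rightarrow> complex" where
  "average S f = (\<Sum>x\<in>S. f x) / of_nat (card S)"

lemma average_cong: "(\<And>x. x \<in> S \<Longrightarrow> f x = g x) \<Longrightarrow> average S f = average S g"
  by (simp add: average_def)

lemma average_singleton: "average {a} f = f a"
  by (simp add: average_def)

lemma average_const: "finite S \<Longrightarrow> S \<noteq> {} \<Longrightarrow> average S (\<lambda>_. c) = c"
  by (simp add: average_def)

lemma average_image: "inj_on g S \<Longrightarrow> average (g ` S) f = average S (\<lambda>x. f (g x))"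
  by (simp add: average_def card_image sum.reindex)

lemma average_swap:
  "average S (\<lambda>x. average T (f x)) = average T (\<lambda>y. average S (\<lambda>x. f x y))"
proof -
  have "(\<Sum>x\<in>S. (\<Sum>y\<in>T. f x y) / of_nat (card T)) / of_nat (card S)
      = (\<Sum>x\<in>S. \<Sum>y\<in>T. f x y) / (of_nat (card S) * of_nat (card T))"
    by (simp add: sum_divide_distrib[symmetric])
  also have "\<dots> = (\<Sum>y\<in>T. (\<Sum>x\<in>S. f x y) / of_nat (card S)) / of_nat (card T)"
    by (simp add: sum_divide_distrib[symmetric] sum.swap[of _ S] mult.commute)
  finally show ?thesis
    by (simp add: average_def)
qed

lemma average_mmul_left_invariant:
  assumes "finite I" "mat_group I S" "X \<in> S"
  shows "average S (\<lambda>Y. f (mmul I X Y)) = average S f"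
  unfolding average_def using sum.reindex_bij_betw[OF mat_group_mmul_left_bij[OF assms], of f] by simp

lemma average_mmul_right_invariant:
  assumes "finite I" "mat_group I S" "X \<in> S"
  shows "average S (\<lambda>Y. f (mmul I Y X)) = average S f"
  unfolding average_def using sum.reindex_bij_betw[OF mat_group_mmul_right_bij[OF assms], of f] by simp

text \<open>Both sides equal the S-average of g W = avg_U f(W Y): the left side because g is
  right U-invariant and S = E U, the right side by translation invariance of S-averages.\<close>

lemma average_mmul_factor:
  fixes f :: "('i,'f::field) mat \<Rightarrow> complex"
  assumes "finite I" "mat_group I S" "mat_group I E" "mat_group I U" "E \<subseteq> S" "U \<subseteq> S"
    and "\<forall>W\<in>S. \<exists>X\<in>E. \<exists>Y\<in>U. W = mmul I X Y"
  shows "average E (\<lambda>X. average U (\<lambda>Y. f (mmul I X Y))) = average S f"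
proof -
  define g where "g = (\<lambda>W. average U (\<lambda>Y. f (mmul I W Y)))"
  have nonempty: "finite S" "S \<noteq> {}" "finite E" "E \<noteq> {}" "finite U" "U \<noteq> {}"
    using mat_groupD(1,3) assms(2-4) by blast+
  have g_right: "g (mmul I W Y) = g W" if "Y \<in> U" for W Y
    unfolding g_def mmul_assoc by (rule average_mmul_left_invariant[OF assms(1,4) that])
  have g_left: "average E (\<lambda>X. g (mmul I X W)) = average E g" if W: "W \<in> S" for W
  proof -
    obtain X0 Y0 where X0: "X0 \<in> E" and "Y0 \<in> U" "W = mmul I X0 Y0"
      using assms(7) W by blast
    then have "average E (\<lambda>X. g (mmul I X W)) = average E (\<lambda>X. g (mmul I X X0))"
      by (simp add: g_right flip: mmul_assoc)
    also have "\<dots> = average E g"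
      by (rule average_mmul_right_invariant[OF assms(1,3) X0])
    finally show ?thesis .
  qed
  have "average S f = average U (\<lambda>Y. average S (\<lambda>W. f (mmul I W Y)))"
    using average_mmul_right_invariant[OF assms(1,2)] assms(6) nonempty(5,6)
    by (simp add: subset_iff average_const cong: average_cong)
  also have "\<dots> = average S g"
    unfolding g_def by (rule average_swap)
  also have "\<dots> = average E (\<lambda>X. average S (\<lambda>W. g (mmul I X W)))"
    using average_mmul_left_invariant[OF assms(1,2)] assms(5) nonempty(3,4)
    by (simp add: subset_iff average_const cong: average_cong)
  also have "\<dots> = average S (\<lambda>W. average E (\<lambda>X. g (mmul I X W)))"
    by (rule average_swap)
  also have "\<dots> = average E g"
    using g_left nonempty(1,2) by (simp add: average_const cong: average_cong)
  finally show ?thesis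
    unfolding g_def by (rule sym)
qed

section \<open>Diagonal blocks\<close>

definition mat_restr :: "'i set \<Rightarrow> ('i,'f::zero) mat \<Rightarrow> ('i,'f) mat" where
  "mat_restr K Y = (\<lambda>i j. if i \<in> K \<and> j \<in> K then Y i j else 0)"

definition mat_ext :: "'i set \<Rightarrow> 'i set \<Rightarrow> ('i,'f::{zero,one}) mat \<Rightarrow> ('i,'f) mat" where
  "mat_ext I K x = (\<lambda>i j. if i \<in> K \<and> j \<in> K then x i j else one_mat I i j)"

definition block_diagonal :: "'i set \<Rightarrow> ('i,'f::zero) mat \<Rightarrow> bool" where
  "block_diagonal K Y \<longleftrightarrow> (\<forall>i j. (i \<in> K) \<noteq> (j \<in> K) \<longrightarrow> Y i j = 0)"

lemma mat_on_mat_restr: "mat_on K (mat_restr K Y)"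
  by (simp add: mat_on_def mat_restr_def)

lemma mat_on_mat_ext: "K \<subseteq> I \<Longrightarrow> mat_on I (mat_ext I K x)"
  by (auto simp: mat_on_def mat_ext_def one_mat_def)

lemma mat_restr_mat_ext: "mat_on K x \<Longrightarrow> mat_restr K (mat_ext I K x) = x"
  by (auto simp: mat_restr_def mat_ext_def mat_on_def fun_eq_iff)

lemma mat_restr_one_mat: "K \<subseteq> I \<Longrightarrow> mat_restr K (one_mat I) = one_mat K"
  by (auto simp: mat_restr_def one_mat_def fun_eq_iff)

lemma mat_ext_one_mat: "K \<subseteq> I \<Longrightarrow> mat_ext I K (one_mat K) = one_mat I"
  by (auto simp: mat_ext_def one_mat_def fun_eq_iff)

lemma mmul_mat_ext:
  assumes "finite I" "K \<subseteq> I" "mat_on K x"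
  shows "mmul I (mat_ext I K x) (mat_ext I K y) = mat_ext I K (mmul K x y)"
proof (intro ext)
  fix i j
  show "mmul I (mat_ext I K x) (mat_ext I K y) i j = mat_ext I K (mmul K x y) i j"
  proof (cases "i \<in> K \<and> j \<in> K")
    case True
    have "mmul I (mat_ext I K x) (mat_ext I K y) i j = (\<Sum>k\<in>K. x i k * y k j)"
      unfolding mmul_def
      by (rule sum.mono_neutral_cong_right[OF assms(1,2)]) (use True in \<open>auto simp: mat_ext_def one_mat_def\<close>)
    then show ?thesis
      using True by (simp add: mat_ext_def mmul_def)
  next
    case False
    have "mmul I (mat_ext I K x) (mat_ext I K y) i j = one_mat I i j"
    proof (cases "i \<in> K")
      case True
      then have "j \<notin> K"
        using False by blast
      then show ?thesis
        by (subst mmul_eq_left_if_col_one[OF assms(1) mat_on_mat_ext[OF assms(2)]])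
          (auto simp: mat_ext_def one_mat_def)
    next
      case False
      then show ?thesis
        by (subst mmul_eq_right_if_row_one[OF assms(1) mat_on_mat_ext[OF assms(2)]])
          (auto simp: mat_ext_def one_mat_def)
    qed
    then show ?thesis
      using False by (auto simp: mat_ext_def)
  qed
qed

lemma mat_ext_in_GL:
  assumes "finite I" "K \<subseteq> I" "x \<in> GL K"
  shows "mat_ext I K x \<in> GL I"
proof -
  obtain y where y: "mat_on K y" "mmul K x y = one_mat K" "mmul K y x = one_mat K"
    using GL_inverse[OF assms(3)] by blast
  have "mmul I (mat_ext I K x) (mat_ext I K y) = one_mat I"
    using mmul_mat_ext[OF assms(1,2) GL_imp_mat_on[OF assms(3)]] y(2) mat_ext_one_mat[OF assms(2)] by simp
  moreover have "mmul I (mat_ext I K y) (mat_ext I K x) = one_mat I"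
    using mmul_mat_ext[OF assms(1,2) y(1)] y(3) mat_ext_one_mat[OF assms(2)] by simp
  ultimately show ?thesis
    unfolding GL_def using mat_on_mat_ext[OF assms(2)] by blast
qed

lemma mmul_mat_restr:
  assumes "finite I" "K \<subseteq> I" "block_diagonal K Y \<or> block_diagonal K Z"
  shows "mmul K (mat_restr K Y) (mat_restr K Z) = mat_restr K (mmul I Y Z)"
proof (intro ext)
  fix i j
  show "mmul K (mat_restr K Y) (mat_restr K Z) i j = mat_restr K (mmul I Y Z) i j"
  proof (cases "i \<in> K \<and> j \<in> K")
    case True
    have "(\<Sum>k\<in>K. Y i k * Z k j) = (\<Sum>k\<in>I. Y i k * Z k j)"
      using assms(3) True by (intro sum.mono_neutral_left[OF assms(1,2)]) (auto simp: block_diagonal_def)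
    then show ?thesis
      using True by (simp add: mmul_def mat_restr_def)
  next
    case False
    then show ?thesis
      by (auto simp: mmul_def mat_restr_def)
  qed
qed

lemma mat_restr_in_GL:
  assumes "finite I" "K \<subseteq> I" "Y \<in> GL I" "block_diagonal K Y"
  shows "mat_restr K Y \<in> GL K"
proof -
  obtain Z where Z: "mmul I Y Z = one_mat I" "mmul I Z Y = one_mat I"
    using GL_inverse[OF assms(3)] by blast
  have "mmul K (mat_restr K Y) (mat_restr K Z) = one_mat K"
    using mmul_mat_restr[OF assms(1,2) disjI1[OF assms(4)]] Z(1) mat_restr_one_mat[OF assms(2)] by simp
  moreover have "mmul K (mat_restr K Z) (mat_restr K Y) = one_mat K"
    using mmul_mat_restr[OF assms(1,2) disjI2[OF assms(4)]] Z(2) mat_restr_one_mat[OF assms(2)] by simp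
  ultimately show ?thesis
    unfolding GL_def using mat_on_mat_restr by blast
qed

lemma block_diagonal_split:
  assumes "finite I" "K \<subseteq> I" "mat_on I Y" "block_diagonal K Y"
  shows "Y = mmul I (mat_ext I K (mat_restr K Y)) (mat_ext I (I - K) (mat_restr (I - K) Y))"
proof (intro ext)
  fix i j
  let ?L = "mat_ext I K (mat_restr K Y)" and ?R = "mat_ext I (I - K) (mat_restr (I - K) Y)"
  show "Y i j = mmul I ?L ?R i j"
  proof (cases "i \<in> K")
    case False
    have "mmul I ?L ?R i j = ?R i j"
      by (rule mmul_eq_right_if_row_one[OF assms(1) mat_on_mat_ext]) (use False in \<open>auto simp: mat_ext_def\<close>)
    then show ?thesis
      using False assms(3,4) by (auto simp: mat_ext_def mat_restr_def one_mat_def block_diagonal_def mat_on_def)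
  next
    case True
    show ?thesis
    proof (cases "j \<in> K")
      case True
      have "mmul I ?L ?R i j = ?L i j"
        by (rule mmul_eq_left_if_col_one[OF assms(1) mat_on_mat_ext[OF assms(2)]]) (use True in \<open>simp add: mat_ext_def\<close>)
      then show ?thesis
        using \<open>i \<in> K\<close> True by (simp add: mat_ext_def mat_restr_def)
    next
      case False
      have "mmul I ?L ?R i j = 0"
        unfolding mmul_def
        by (rule sum.neutral) (use \<open>i \<in> K\<close> False in \<open>auto simp: mat_ext_def mat_restr_def one_mat_def\<close>)
      then show ?thesis
        using assms(4) \<open>i \<in> K\<close> False by (simp add: block_diagonal_def)
    qed
  qed
qed

lemma mmul_mat_ext_right:
  assumes "finite I" "K \<subseteq> I" "mat_on I Y" "block_diagonal K Y"
  shows "mmul I Y (mat_ext I K x) = (\<lambda>i j. if i \<in> K \<and> j \<in> K then mmul K (mat_restr K Y) x i j else Y i j)"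
proof (intro ext)
  fix i j
  show "mmul I Y (mat_ext I K x) i j = (if i \<in> K \<and> j \<in> K then mmul K (mat_restr K Y) x i j else Y i j)"
  proof (cases "j \<in> K")
    case False
    have "mmul I Y (mat_ext I K x) i j = Y i j"
      by (rule mmul_eq_left_if_col_one[OF assms(1,3)]) (use False in \<open>simp add: mat_ext_def\<close>)
    then show ?thesis
      using False by simp
  next
    case True
    show ?thesis
    proof (cases "i \<in> K")
      case True
      have "mmul I Y (mat_ext I K x) i j = (\<Sum>k\<in>K. Y i k * x k j)"
        unfolding mmul_def
        by (rule sum.mono_neutral_cong_right[OF assms(1,2)])
          (use \<open>j \<in> K\<close> in \<open>auto simp: mat_ext_def one_mat_def\<close>)
      then show ?thesis
        using True \<open>j \<in> K\<close> by (simp add: mmul_def mat_restr_def)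
    next
      case False
      have "mmul I Y (mat_ext I K x) i j = 0"
        unfolding mmul_def
        by (rule sum.neutral)
          (use False \<open>j \<in> K\<close> assms(4) in \<open>auto simp: mat_ext_def one_mat_def block_diagonal_def\<close>)
      then show ?thesis
        using False \<open>j \<in> K\<close> assms(4) by (simp add: block_diagonal_def)
    qed
  qed
qed

lemma UT_block_diagonal:
  assumes "Y \<in> UT I \<pi>" "\<And>i j. (i,j) \<in> \<pi> \<Longrightarrow> i \<in> K \<longleftrightarrow> j \<in> K"
  shows "block_diagonal K Y"
  unfolding block_diagonal_def
proof (intro allI impI)
  fix i j
  assume ij: "(i \<in> K) \<noteq> (j \<in> K)"
  then have "(i,j) \<notin> \<pi>"
    using assms(2) by blast
  then show "Y i j = 0"
    using ij UT_entry[OF assms(1)] by (auto simp: one_mat_def)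
qed

lemma mat_restr_in_UT:
  assumes "finite I" "K \<subseteq> I" "Y \<in> UT I \<pi>" "block_diagonal K Y" "\<pi> \<inter> K \<times> K \<subseteq> \<pi>'"
  shows "mat_restr K Y \<in> UT K \<pi>'"
  unfolding UT_iff
proof (intro conjI allI impI)
  show "mat_restr K Y \<in> GL K"
    using mat_restr_in_GL[OF assms(1,2) UT_imp_GL[OF assms(3)] assms(4)] .
  fix i j
  assume ij: "(i,j) \<notin> \<pi>'"
  show "mat_restr K Y i j = one_mat K i j"
  proof (cases "i \<in> K \<and> j \<in> K")
    case True
    then have "(i,j) \<notin> \<pi>"
      using ij assms(5) by blast
    then show ?thesis
      using True assms(2) UT_entry[OF assms(3)] by (auto simp: mat_restr_def one_mat_def)
  qed (auto simp: mat_restr_def one_mat_def)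
qed

lemma mat_ext_in_UT:
  assumes "finite I" "K \<subseteq> I" "x \<in> UT K \<pi>"
  shows "mat_ext I K x \<in> UT I \<pi>"
  unfolding UT_iff
proof (intro conjI allI impI)
  show "mat_ext I K x \<in> GL I"
    using mat_ext_in_GL[OF assms(1,2) UT_imp_GL[OF assms(3)]] .
  fix i j
  assume "(i,j) \<notin> \<pi>"
  then show "mat_ext I K x i j = one_mat I i j"
    using assms(2) UT_entry[OF assms(3), of i j] by (auto simp: mat_ext_def one_mat_def)
qed

lemma UT_eq_mat_ext_image:
  assumes "finite I" "K \<subseteq> I" "\<pi> \<subseteq> K \<times> K"
  shows "(UT I \<pi> :: ('i,'f::field) mat set) = mat_ext I K ` UT K \<pi>"
proof
  show "mat_ext I K ` UT K \<pi> \<subseteq> (UT I \<pi> :: ('i,'f) mat set)"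
    using mat_ext_in_UT[OF assms(1,2)] by blast
  show "(UT I \<pi> :: ('i,'f) mat set) \<subseteq> mat_ext I K ` UT K \<pi>"
  proof
    fix Y :: "('i,'f) mat"
    assume Y: "Y \<in> UT I \<pi>"
    have "block_diagonal K Y"
      using UT_block_diagonal[OF Y] assms(3) by blast
    then have "mat_restr K Y \<in> UT K \<pi>"
      using mat_restr_in_UT[OF assms(1,2) Y] by blast
    moreover have "Y = mat_ext I K (mat_restr K Y)"
      using UT_entry[OF Y] assms(3) by (auto simp: mat_ext_def mat_restr_def fun_eq_iff)
    ultimately show "Y \<in> mat_ext I K ` UT K \<pi>"
      by blast
  qed
qed

lemma UT_block_factor:
  assumes "finite I" "K \<subseteq> I" "\<pi> \<subseteq> I \<times> I"
    and "\<And>i j. (i,j) \<in> \<pi> \<Longrightarrow> i \<in> K \<longleftrightarrow> j \<in> K" and "Y \<in> UT I \<pi>"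
  shows "mat_ext I K (mat_restr K Y) \<in> UT I (\<pi> \<inter> K \<times> K)"
    and "mat_ext I (I - K) (mat_restr (I - K) Y) \<in> UT I (\<pi> \<inter> (I - K) \<times> (I - K))"
    and "Y = mmul I (mat_ext I K (mat_restr K Y)) (mat_ext I (I - K) (mat_restr (I - K) Y))"
proof -
  have K: "block_diagonal K Y"
    using UT_block_diagonal[OF assms(5,4)] .
  have "(i,j) \<in> \<pi> \<Longrightarrow> i \<in> I - K \<longleftrightarrow> j \<in> I - K" for i j
    using assms(3,4) by blast
  then have IK: "block_diagonal (I - K) Y"
    using UT_block_diagonal[OF assms(5)] by blast
  show "mat_ext I K (mat_restr K Y) \<in> UT I (\<pi> \<inter> K \<times> K)"
    by (intro mat_ext_in_UT mat_restr_in_UT[OF assms(1,2,5) K]) (use assms(1,2) in auto)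
  show "mat_ext I (I - K) (mat_restr (I - K) Y) \<in> UT I (\<pi> \<inter> (I - K) \<times> (I - K))"
    by (intro mat_ext_in_UT mat_restr_in_UT[OF assms(1) _ assms(5) IK]) (use assms(1) in auto)
  show "Y = mmul I (mat_ext I K (mat_restr K Y)) (mat_ext I (I - K) (mat_restr (I - K) Y))"
    using block_diagonal_split[OF assms(1,2) GL_imp_mat_on[OF UT_imp_GL[OF assms(5)]] K] .
qed

definition mat_part :: "('i \<times> 'i) set \<Rightarrow> ('i,'f::zero) mat \<Rightarrow> ('i,'f) mat" where
  "mat_part E w = (\<lambda>i j. if (i,j) \<in> E then w i j else 0)"

text \<open>For Q = Eq A \<union> Asc A and E = Eq A this says that the block diagonal part of a block upper
  triangular matrix depends multiplicatively on it.\<close>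

lemma mmul_mat_part:
  assumes "Id_on I \<subseteq> E" "E \<subseteq> Q" "trans E"
    and convex: "\<And>i k j. (i,k) \<in> Q \<Longrightarrow> (k,j) \<in> Q \<Longrightarrow> (i,j) \<in> E \<Longrightarrow> (i,k) \<in> E \<and> (k,j) \<in> E"
    and "w \<in> UT I Q" "z \<in> UT I Q"
  shows "mmul I (mat_part E w) (mat_part E z) = mat_part E (mmul I w z)"
proof (intro ext)
  fix i j
  have IdQ: "Id_on I \<subseteq> Q"
    using assms(1,2) by blast
  show "mmul I (mat_part E w) (mat_part E z) i j = mat_part E (mmul I w z) i j"
  proof (cases "(i,j) \<in> E")
    case True
    have "mat_part E w i k * mat_part E z k j = w i k * z k j" for k
    proof (cases "w i k \<noteq> 0 \<and> z k j \<noteq> 0")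
      case True
      then have "(i,k) \<in> Q" "(k,j) \<in> Q"
        using UT_entry_nonzero[OF assms(5) IdQ] UT_entry_nonzero[OF assms(6) IdQ] by auto
      then show ?thesis
        using convex \<open>(i,j) \<in> E\<close> by (simp add: mat_part_def)
    qed (auto simp: mat_part_def)
    then show ?thesis
      using True by (simp add: mmul_def mat_part_def)
  next
    case False
    then have "mat_part E w i k * mat_part E z k j = 0" for k
      using assms(3) by (auto simp: mat_part_def dest: transD)
    then show ?thesis
      using False unfolding mmul_def by (simp add: mat_part_def del: mult_eq_0_iff)
  qed
qed

lemma mat_part_one_mat: "Id_on I \<subseteq> E \<Longrightarrow> mat_part E (one_mat I) = one_mat I"
  by (auto simp: mat_part_def one_mat_def fun_eq_iff)

lemma mat_part_in_GL:
  assumes "finite I" "Id_on I \<subseteq> E" "E \<subseteq> Q" "trans E" "trans Q"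
    and "\<And>i k j. (i,k) \<in> Q \<Longrightarrow> (k,j) \<in> Q \<Longrightarrow> (i,j) \<in> E \<Longrightarrow> (i,k) \<in> E \<and> (k,j) \<in> E"
    and "w \<in> UT I Q"
  shows "mat_part E w \<in> (GL I :: ('i,'f::{field,finite}) mat set)"
proof -
  obtain z where z: "z \<in> UT I Q" "mmul I w z = one_mat I" "mmul I z w = one_mat I"
    using mat_group_inverse[OF assms(1) mat_group_UT[OF assms(1,5)] assms(7)] by blast
  have "mat_on I (mat_part E v)" if "v \<in> UT I Q" for v :: "('i,'f) mat"
    using GL_imp_mat_on[OF UT_imp_GL[OF that]] by (auto simp: mat_on_def mat_part_def)
  moreover have "mmul I (mat_part E w) (mat_part E z) = one_mat I"
    using mmul_mat_part[OF assms(2-4,6,7) z(1)] z(2) mat_part_one_mat[OF assms(2)] by simp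
  moreover have "mmul I (mat_part E z) (mat_part E w) = one_mat I"
    using mmul_mat_part[OF assms(2-4,6) z(1) assms(7)] z(3) mat_part_one_mat[OF assms(2)] by simp
  ultimately show ?thesis
    unfolding GL_def using assms(7) z(1) by blast
qed

section \<open>Set compositions\<close>

lemma Eq_set: "Eq C = (\<Union>X\<in>set C. X \<times> X)"
proof -
  have "(\<exists>r<length C. i \<in> C ! r \<and> j \<in> C ! r) \<longleftrightarrow> (\<exists>X\<in>set C. i \<in> X \<and> j \<in> X)" for i j
    by (metis in_set_conv_nth)
  then show ?thesis
    unfolding Eq_def by blast
qed

lemma Eq_Cons: "Eq (X # C) = X \<times> X \<union> Eq C"
  by (simp add: Eq_set)

lemma Asc_Nil [simp]: "Asc [] = {}"
  by (simp add: Asc_def)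

lemma Asc_Cons: "Asc (X # C) = X \<times> \<Union>(set C) \<union> Asc C"
proof -
  have "(\<exists>r s. r < s \<and> s < length (X # C) \<and> i \<in> (X # C) ! r \<and> j \<in> (X # C) ! s) \<longleftrightarrow>
      (i \<in> X \<and> j \<in> \<Union>(set C)) \<or> (\<exists>r s. r < s \<and> s < length C \<and> i \<in> C ! r \<and> j \<in> C ! s)"
    (is "?lhs \<longleftrightarrow> ?rhs") for i j
  proof
    assume ?lhs
    then obtain r s where rs: "r < s" "s < Suc (length C)" "i \<in> (X # C) ! r" "j \<in> (X # C) ! s"
      by auto
    then obtain s' where s': "s = Suc s'"
      using not0_implies_Suc by fastforce
    show ?rhs
    proof (cases r)
      case 0
      then show ?thesis
        using rs s' nth_mem[of s' C] by auto
    next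
      case (Suc r')
      then show ?thesis
        using rs s' by (intro disjI2 exI[of _ r'] exI[of _ s']) auto
    qed
  next
    assume ?rhs
    then show ?lhs
    proof
      assume "i \<in> X \<and> j \<in> \<Union>(set C)"
      then obtain s where "s < length C" "j \<in> C ! s" "i \<in> X"
        by (auto simp: in_set_conv_nth)
      then show ?lhs
        by (intro exI[of _ 0] exI[of _ "Suc s"]) auto
    next
      assume "\<exists>r s. r < s \<and> s < length C \<and> i \<in> C ! r \<and> j \<in> C ! s"
      then obtain r s where "r < s" "s < length C" "i \<in> C ! r" "j \<in> C ! s"
        by blast
      then show ?lhs
        by (intro exI[of _ "Suc r"] exI[of _ "Suc s"]) auto
    qed
  qed
  then show ?thesis
    unfolding Asc_def by auto
qed

lemma Asc_append: "Asc (C @ D) = Asc C \<union> Asc D \<union> \<Union>(set C) \<times> \<Union>(set D)"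
  by (induction C) (auto simp: Asc_Cons)

lemma Asc_subset: "Asc C \<subseteq> \<Union>(set C) \<times> \<Union>(set C)"
  by (induction C) (auto simp: Asc_Cons)

lemma Union_comp_restr: "\<Union>(set (comp_restr C J)) = \<Union>(set C) \<inter> J"
  by (auto simp: comp_restr_def)

lemma Eq_comp_restr: "Eq (comp_restr C J) = Eq C \<inter> J \<times> J"
  by (induction C) (auto simp: comp_restr_def Eq_Cons Eq_set)

lemma Asc_comp_restr: "Asc (comp_restr C J) = Asc C \<inter> J \<times> J"
proof (induction C)
  case (Cons X C)
  have "comp_restr (X # C) J = (if X \<inter> J = {} then [] else [X \<inter> J]) @ comp_restr C J"
    by (simp add: comp_restr_def)
  then show ?case
    using Cons by (auto simp: Asc_Cons Union_comp_restr)
qed (simp add: comp_restr_def)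

lemma Eq_concat_subset:
  assumes "\<And>X. X \<in> set A \<Longrightarrow> \<Union>(set (f X)) \<subseteq> X"
  shows "Eq (concat (map f A)) \<subseteq> Eq A"
proof
  fix p
  assume "p \<in> Eq (concat (map f A))"
  then obtain X Y where "X \<in> set A" "Y \<in> set (f X)" "p \<in> Y \<times> Y"
    by (auto simp: Eq_set)
  then show "p \<in> Eq A"
    using assms[of X] by (auto simp: Eq_set)
qed

lemma Asc_concat_subset:
  assumes "\<And>X. X \<in> set A \<Longrightarrow> \<Union>(set (f X)) \<subseteq> X"
  shows "Asc (concat (map f A)) \<subseteq> Eq A \<union> Asc A"
  using assms
proof (induction A)
  case (Cons X A)
  have "\<Union>(set (f Y)) \<subseteq> \<Union>(set A)" if "Y \<in> set A" for Y
    using Cons.prems[of Y] that by auto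
  then have tail: "\<Union>(set (concat (map f A))) \<subseteq> \<Union>(set A)"
    by auto
  have head: "\<Union>(set (f X)) \<subseteq> X"
    using Cons.prems by simp
  then have "Asc (f X) \<subseteq> X \<times> X"
    using Asc_subset[of "f X"] by blast
  moreover have "Asc (concat (map f A)) \<subseteq> Eq A \<union> Asc A"
    using Cons by simp
  moreover have "\<Union>(set (f X)) \<times> \<Union>(set (concat (map f A))) \<subseteq> X \<times> \<Union>(set A)"
    using head tail by blast
  moreover have "Asc (concat (map f (X # A))) =
      Asc (f X) \<union> Asc (concat (map f A)) \<union> \<Union>(set (f X)) \<times> \<Union>(set (concat (map f A)))"
    by (simp add: Asc_append)
  ultimately show ?case
    unfolding Eq_Cons Asc_Cons by blast
qed simp

text \<open>For i outside every block THE gives an unspecified value, so all facts about block_index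
  assume i \<in> I.\<close>

definition block_index :: "'i set list \<Rightarrow> 'i \<Rightarrow> nat" where
  "block_index C i = (THE r. r < length C \<and> i \<in> C ! r)"

lemma block_index_eq:
  assumes "set_composition I C" "r < length C" "i \<in> C ! r"
  shows "block_index C i = r"
  unfolding block_index_def
proof (rule the_equality)
  fix s
  assume s: "s < length C \<and> i \<in> C ! s"
  have disjoint: "C ! r \<inter> C ! s = {}" if "r < s" "s < length C" for r s
    using assms(1) that by (simp add: set_composition_def)
  show "s = r"
    using disjoint[of r s] disjoint[of s r] s assms(2,3) by (cases r s rule: linorder_cases) auto
qed (use assms in simp)

lemma block_index_mem:
  assumes "set_composition I C" "i \<in> I"
  shows "block_index C i < length C" "i \<in> C ! block_index C i"
proof -
  obtain r where "r < length C" "i \<in> C ! r"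
    using assms by (auto simp: set_composition_def in_set_conv_nth)
  then show "block_index C i < length C" "i \<in> C ! block_index C i"
    using block_index_eq[OF assms(1)] by auto
qed

lemma set_composition_nth_subset: "set_composition I C \<Longrightarrow> r < length C \<Longrightarrow> C ! r \<subseteq> I"
  by (auto simp: set_composition_def)

lemma Eq_iff_block_index:
  assumes "set_composition I C"
  shows "(i,j) \<in> Eq C \<longleftrightarrow> i \<in> I \<and> j \<in> I \<and> block_index C i = block_index C j"
proof
  assume "(i,j) \<in> Eq C"
  then obtain r where "r < length C" "i \<in> C ! r" "j \<in> C ! r"
    by (auto simp: Eq_def)
  then show "i \<in> I \<and> j \<in> I \<and> block_index C i = block_index C j"
    using block_index_eq[OF assms] set_composition_nth_subset[OF assms] by blast
next
  assume "i \<in> I \<and> j \<in> I \<and> block_index C i = block_index C j"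
  then show "(i,j) \<in> Eq C"
    using block_index_mem[OF assms, of i] block_index_mem[OF assms, of j] by (auto simp: Eq_def)
qed

lemma Asc_iff_block_index:
  assumes "set_composition I C"
  shows "(i,j) \<in> Asc C \<longleftrightarrow> i \<in> I \<and> j \<in> I \<and> block_index C i < block_index C j"
proof
  assume "(i,j) \<in> Asc C"
  then obtain r s where "r < s" "s < length C" "i \<in> C ! r" "j \<in> C ! s"
    by (auto simp: Asc_def)
  then show "i \<in> I \<and> j \<in> I \<and> block_index C i < block_index C j"
    using block_index_eq[OF assms] set_composition_nth_subset[OF assms] by (metis order.strict_trans subsetD)
next
  assume "i \<in> I \<and> j \<in> I \<and> block_index C i < block_index C j"
  then show "(i,j) \<in> Asc C"
    using block_index_mem[OF assms, of i] block_index_mem[OF assms, of j] by (auto simp: Asc_def)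
qed

lemma set_composition_Union: "set_composition I C \<Longrightarrow> \<Union>(set C) = I"
  by (simp add: set_composition_def)

lemma set_composition_sorted_wrt_disjoint:
  "set_composition I C \<Longrightarrow> sorted_wrt (\<lambda>X Y. X \<inter> Y = {}) C"
  by (simp add: set_composition_def sorted_wrt_iff_nth_less)

lemma trans_Eq: "set_composition I C \<Longrightarrow> trans (Eq C)"
  by (auto simp: trans_def Eq_iff_block_index)

lemma trans_Asc: "set_composition I C \<Longrightarrow> trans (Asc C)"
  by (auto simp: trans_def Asc_iff_block_index)

lemma trans_Eq_Un_Asc: "set_composition I C \<Longrightarrow> trans (Eq C \<union> Asc C)"
  by (auto simp: trans_def Eq_iff_block_index Asc_iff_block_index)

lemma Id_on_subset_Eq: "set_composition I C \<Longrightarrow> Id_on I \<subseteq> Eq C"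
  by (auto simp: Eq_iff_block_index)

lemma trans_Id_on_Un: "trans R \<Longrightarrow> trans (Id_on K \<union> R)"
  unfolding trans_def by blast

lemma trans_Times: "trans (K \<times> K)"
  unfolding trans_def by blast

section \<open>Deflation along a refinement\<close>

lemma Resf_eq_average:
  assumes "finite I" "trans \<tau>" "Id_on I \<subseteq> \<tau>" "trans (Eq C \<union> Asc C)" "I \<subseteq> \<Union>(set C)"
    and "h \<in> UP I \<tau> C"
  shows "Resf I \<tau> C \<phi> h = average (UR I \<tau> C) (\<lambda>x. \<phi> (mmul I h x))"
proof -
  have "Id_on I \<subseteq> Eq C"
    using assms(5) by (auto simp: Eq_set)
  then have "UR I \<tau> C \<subseteq> UP I \<tau> C"
    unfolding UR_def UP_def using assms(3) by (intro UT_mono) blast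
  then have "mmul I h x \<in> UP I \<tau> C" if "x \<in> UR I \<tau> C" for x
    using mmul_in_UT[OF assms(1) trans_Int[OF assms(2,4)]] assms(6) that by (auto simp: UP_def)
  then show ?thesis
    by (simp add: Resf_def Deflate_def Res_def average_def cong: sum.cong)
qed

lemma tensor_maps_Nil: "tensor_maps [] = id"
  by (simp add: tensor_maps_def)

lemma tensor_maps_Cons: "tensor_maps ((J,F) # Fs) = blk_apply J F \<circ> tensor_maps Fs"
  by (simp add: tensor_maps_def)

lemma blk_apply_eq_mat_restr:
  "blk_apply J F \<psi> h = F (\<lambda>g. \<psi> (\<lambda>i j. if i \<in> J \<and> j \<in> J then g i j else h i j)) (mat_restr J h)"
  by (simp add: blk_apply_def mat_restr_def)

locale composition_refinement =
  fixes I :: "'i set" and \<tau> :: "('i \<times> 'i) set" and A B :: "'i set list"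
  assumes finite_I: "finite I" and total_order: "total_order_of I \<tau>"
    and composition_A: "set_composition I A" and composition_B: "set_composition I B"
    and refines: "refines B A"
begin

abbreviation UR_rel :: "'i set list \<Rightarrow> ('i \<times> 'i) set" where
  "UR_rel C \<equiv> Id_on I \<union> (\<tau> \<inter> Asc C)"

abbreviation blockwise_Resf :: "'i set list \<Rightarrow> ('i set \<times> ((('i,'f::{field,finite}) mat \<Rightarrow> complex)
    \<Rightarrow> ('i,'f) mat \<Rightarrow> complex)) list" where
  "blockwise_Resf Js \<equiv> map (\<lambda>J. (J, Resf J (rel_restr \<tau> J) (comp_restr B J))) Js"

lemma tau_subset: "\<tau> \<subseteq> I \<times> I"
  using total_order by (simp add: total_order_of_def)

lemma Id_on_subset_tau: "Id_on I \<subseteq> \<tau>"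
proof -
  have "\<forall>i\<in>I. (i,i) \<in> \<tau>"
    using total_order unfolding total_order_of_def by (elim conjE)
  then show ?thesis
    by auto
qed

lemma trans_tau: "trans \<tau>"
proof -
  have "\<forall>i j k. (i,j) \<in> \<tau> \<and> (j,k) \<in> \<tau> \<longrightarrow> (i,k) \<in> \<tau>"
    using total_order unfolding total_order_of_def by (elim conjE)
  then show ?thesis
    by (auto intro: transI)
qed

lemmas Eq_A_iff = Eq_iff_block_index[OF composition_A]
  and Asc_A_iff = Asc_iff_block_index[OF composition_A]
  and Eq_B_iff = Eq_iff_block_index[OF composition_B]
  and Asc_B_iff = Asc_iff_block_index[OF composition_B]

lemma A_block_subset: "J \<in> set A \<Longrightarrow> J \<subseteq> I"
  using composition_A by (auto simp: set_composition_def)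

lemma Eq_A_block_iff:
  assumes "J \<in> set A" "(i,j) \<in> Eq A"
  shows "i \<in> J \<longleftrightarrow> j \<in> J"
proof -
  obtain r where r: "r < length A" "J = A ! r"
    using assms(1) by (auto simp: in_set_conv_nth)
  have "i \<in> I" "j \<in> I" "block_index A i = block_index A j"
    using assms(2) Eq_A_iff by auto
  then show ?thesis
    using r block_index_eq[OF composition_A r(1)] block_index_mem(2)[OF composition_A] by metis
qed

lemma Eq_B_subset_Eq_A: "Eq B \<subseteq> Eq A"
  and Asc_B_subset_Eq_Un_Asc_A: "Asc B \<subseteq> Eq A \<union> Asc A"
proof -
  have subset: "\<Union>(set (comp_restr B X)) \<subseteq> X" for X
    by (simp add: Union_comp_restr)
  have B: "B = concat (map (comp_restr B) A)"
    using refines by (simp add: refines_def)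
  show "Eq B \<subseteq> Eq A"
    by (subst B) (rule Eq_concat_subset[OF subset])
  show "Asc B \<subseteq> Eq A \<union> Asc A"
    by (subst B) (rule Asc_concat_subset[OF subset])
qed

lemma block_index_mono:
  assumes "i \<in> I" "j \<in> I" "block_index B i \<le> block_index B j"
  shows "block_index A i \<le> block_index A j"
proof -
  have "(i,j) \<in> Eq B \<union> Asc B"
    using assms by (auto simp: Eq_B_iff Asc_B_iff)
  then have "(i,j) \<in> Eq A \<union> Asc A"
    using Eq_B_subset_Eq_A Asc_B_subset_Eq_Un_Asc_A by blast
  then show ?thesis
    by (auto simp: Eq_A_iff Asc_A_iff)
qed

lemma Asc_A_subset_Asc_B: "Asc A \<subseteq> Asc B"
proof
  fix p
  assume "p \<in> Asc A"
  then obtain i j where p: "p = (i,j)" "i \<in> I" "j \<in> I" "block_index A i < block_index A j"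
    by (cases p) (auto simp: Asc_A_iff)
  then have "\<not> block_index B j \<le> block_index B i"
    using block_index_mono[of j i] by linarith
  then show "p \<in> Asc B"
    using p by (simp add: Asc_B_iff)
qed

lemma Resf_composition_eq_average:
  assumes "set_composition I C" "h \<in> UP I \<tau> C"
  shows "Resf I \<tau> C \<phi> h = average (UR I \<tau> C) (\<lambda>x. \<phi> (mmul I h x))"
  using Resf_eq_average[OF finite_I trans_tau Id_on_subset_tau trans_Eq_Un_Asc[OF assms(1)] _ assms(2)]
    set_composition_Union[OF assms(1)] by simp

lemma mat_group_UR: "set_composition I C \<Longrightarrow> mat_group I (UR I \<tau> C :: ('i,'f::{field,finite}) mat set)"
  unfolding UR_def by (intro mat_group_UT finite_I trans_Id_on_Un trans_Int trans_tau trans_Asc)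

text \<open>blockwise_UP is UP(\<tau>,B) \<inter> UL(\<tau>,A), the block diagonal sum of the groups
  UP(\<tau>|A_r, B|A_r). Likewise blockwise_UR I is UR(\<tau>,B) \<inter> UL(\<tau>,A), the sum of the
  UR(\<tau>|A_r, B|A_r); in blockwise_UR U only the blocks inside U are kept.\<close>

definition blockwise_UP :: "('i,'f::field) mat set" where
  "blockwise_UP = UT I (\<tau> \<inter> (Eq B \<union> Asc B) \<inter> Eq A)"

definition blockwise_UR :: "'i set \<Rightarrow> ('i,'f::field) mat set" where
  "blockwise_UR U = UT I (UR_rel B \<inter> Eq A \<inter> U \<times> U)"

lemma mat_group_blockwise_UP: "mat_group I (blockwise_UP :: ('i,'f::{field,finite}) mat set)"
  unfolding blockwise_UP_def
  by (intro mat_group_UT finite_I trans_Int trans_tau trans_Eq_Un_Asc[OF composition_B]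
      trans_Eq[OF composition_A])

lemma mat_group_blockwise_UR: "mat_group I (blockwise_UR U :: ('i,'f::{field,finite}) mat set)"
  unfolding blockwise_UR_def
  by (intro mat_group_UT finite_I trans_Int trans_Id_on_Un trans_tau trans_Asc[OF composition_B]
      trans_Eq[OF composition_A] trans_Times)

lemma blockwise_UR_subset_UP: "blockwise_UR U \<subseteq> blockwise_UP"
  unfolding blockwise_UR_def blockwise_UP_def
  using Id_on_subset_tau Id_on_subset_Eq[OF composition_B] by (intro UT_mono) blast

lemma blockwise_UR_mono: "U \<subseteq> V \<Longrightarrow> blockwise_UR U \<subseteq> blockwise_UR V"
  unfolding blockwise_UR_def by (intro UT_mono) blast

lemma blockwise_UR_empty: "blockwise_UR {} = {one_mat I}"
  using UT_empty[OF finite_I] by (simp add: blockwise_UR_def)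

lemma blockwise_UR_block:
  assumes "J \<in> set A"
  shows "blockwise_UR J = UT I (UR_rel B \<inter> J \<times> J)"
proof -
  have "J \<times> J \<subseteq> Eq A"
    using assms by (auto simp: Eq_set)
  then have "UR_rel B \<inter> Eq A \<inter> J \<times> J = UR_rel B \<inter> J \<times> J"
    by blast
  then show ?thesis
    by (simp add: blockwise_UR_def)
qed

lemma UR_block:
  assumes "J \<in> set A"
  shows "UR J (rel_restr \<tau> J) (comp_restr B J) = UT J (UR_rel B \<inter> J \<times> J)"
proof -
  have "Id_on J \<union> (rel_restr \<tau> J \<inter> Asc (comp_restr B J)) = UR_rel B \<inter> J \<times> J"
    using A_block_subset[OF assms] by (auto simp: rel_restr_def Asc_comp_restr)
  then show ?thesis
    by (simp add: UR_def)
qed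

lemma UP_block:
  shows "UP J (rel_restr \<tau> J) (comp_restr B J) = UT J (\<tau> \<inter> (Eq B \<union> Asc B) \<inter> J \<times> J)"
proof -
  have "rel_restr \<tau> J \<inter> (Eq (comp_restr B J) \<union> Asc (comp_restr B J)) = \<tau> \<inter> (Eq B \<union> Asc B) \<inter> J \<times> J"
    by (auto simp: rel_restr_def Asc_comp_restr Eq_comp_restr)
  then show ?thesis
    by (simp add: UP_def)
qed

lemma Resf_block_eq_average:
  assumes "J \<in> set A" "g \<in> UP J (rel_restr \<tau> J) (comp_restr B J)"
  shows "Resf J (rel_restr \<tau> J) (comp_restr B J) \<phi> g
    = average (UT J (UR_rel B \<inter> J \<times> J)) (\<lambda>x. \<phi> (mmul J g x))"
proof -
  have J: "J \<subseteq> I"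
    using A_block_subset[OF assms(1)] .
  have "trans (Eq (comp_restr B J) \<union> Asc (comp_restr B J))"
    unfolding Eq_comp_restr Asc_comp_restr Int_Un_distrib2[symmetric]
    by (intro trans_Int trans_Eq_Un_Asc[OF composition_B] trans_Times)
  moreover have "J \<subseteq> \<Union>(set (comp_restr B J))"
    using J composition_B by (auto simp: Union_comp_restr set_composition_def)
  moreover have "Id_on J \<subseteq> rel_restr \<tau> J"
    using J Id_on_subset_tau by (auto simp: rel_restr_def)
  moreover have "trans (rel_restr \<tau> J)"
    unfolding rel_restr_def by (intro trans_Int trans_tau trans_Times)
  ultimately show ?thesis
    using Resf_eq_average[OF finite_subset[OF J finite_I] _ _ _ _ assms(2)]
    unfolding UR_block[OF assms(1)] by blast
qed

lemma blockwise_UP_block_diagonal: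
  assumes "J \<in> set A" "h \<in> blockwise_UP"
  shows "block_diagonal J h"
  using UT_block_diagonal[OF assms(2)[unfolded blockwise_UP_def]] Eq_A_block_iff[OF assms(1)] by blast

lemma blk_apply_Resf:
  fixes \<phi> :: "('i,'f::{field,finite}) mat \<Rightarrow> complex"
  assumes "J \<in> set A" "h \<in> blockwise_UP"
  shows "blk_apply J (Resf J (rel_restr \<tau> J) (comp_restr B J)) \<phi> h
    = average (blockwise_UR J) (\<lambda>Y. \<phi> (mmul I h Y))"
proof -
  let ?R = "UR_rel B \<inter> J \<times> J"
  have J: "J \<subseteq> I"
    using A_block_subset[OF assms(1)] .
  have h: "mat_on I h" "block_diagonal J h"
    using UT_imp_mat_on assms(2) blockwise_UP_block_diagonal[OF assms] by (auto simp: blockwise_UP_def)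
  have "mat_restr J h \<in> UP J (rel_restr \<tau> J) (comp_restr B J)"
    unfolding UP_block blockwise_UP_def
    by (rule mat_restr_in_UT[OF finite_I J assms(2)[unfolded blockwise_UP_def] h(2)]) blast
  then have "blk_apply J (Resf J (rel_restr \<tau> J) (comp_restr B J)) \<phi> h
      = average (UT J ?R) (\<lambda>x. \<phi> (\<lambda>i j. if i \<in> J \<and> j \<in> J then mmul J (mat_restr J h) x i j else h i j))"
    by (simp add: blk_apply_eq_mat_restr Resf_block_eq_average[OF assms(1)])
  also have "\<dots> = average (UT J ?R) (\<lambda>x. \<phi> (mmul I h (mat_ext I J x)))"
    by (simp add: mmul_mat_ext_right[OF finite_I J h])
  also have "\<dots> = average (mat_ext I J ` UT J ?R) (\<lambda>Y. \<phi> (mmul I h Y))"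
  proof -
    have "inj_on (mat_ext I J) (UT J ?R :: ('i,'f) mat set)"
      by (rule inj_on_inverseI[where g = "mat_restr J"])
        (auto simp: mat_restr_mat_ext UT_imp_mat_on)
    then show ?thesis
      using average_image[of "mat_ext I J" _ "\<lambda>Y. \<phi> (mmul I h Y)"] by simp
  qed
  also have "\<dots> = average (blockwise_UR J) (\<lambda>Y. \<phi> (mmul I h Y))"
  proof -
    have "(UT I ?R :: ('i,'f) mat set) = mat_ext I J ` UT J ?R"
      by (rule UT_eq_mat_ext_image[OF finite_I J]) blast
    then show ?thesis
      by (simp add: blockwise_UR_block[OF assms(1)])
  qed
  finally show ?thesis .
qed

lemma blockwise_UR_Un_factor:
  fixes Y :: "('i,'f::field) mat"
  assumes "J \<in> set A" "J \<inter> U = {}" "Y \<in> blockwise_UR (J \<union> U)"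
  shows "\<exists>X\<in>blockwise_UR J. \<exists>Z\<in>blockwise_UR U. Y = mmul I X Z"
proof -
  define \<pi> where "\<pi> = UR_rel B \<inter> Eq A \<inter> (J \<union> U) \<times> (J \<union> U)"
  have J: "J \<subseteq> I"
    using A_block_subset[OF assms(1)] .
  have Y: "Y \<in> UT I \<pi>"
    using assms(3) by (simp add: blockwise_UR_def \<pi>_def)
  have "\<pi> \<subseteq> I \<times> I"
    using tau_subset by (auto simp: \<pi>_def)
  moreover have "(i,j) \<in> \<pi> \<Longrightarrow> i \<in> J \<longleftrightarrow> j \<in> J" for i j
    using Eq_A_block_iff[OF assms(1)] by (auto simp: \<pi>_def)
  ultimately have "mat_ext I J (mat_restr J Y) \<in> UT I (\<pi> \<inter> J \<times> J)"
      "mat_ext I (I - J) (mat_restr (I - J) Y) \<in> UT I (\<pi> \<inter> (I - J) \<times> (I - J))"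
      "Y = mmul I (mat_ext I J (mat_restr J Y)) (mat_ext I (I - J) (mat_restr (I - J) Y))"
    using UT_block_factor[OF finite_I J _ _ Y] by blast+
  moreover have "UT I (\<pi> \<inter> J \<times> J) \<subseteq> (blockwise_UR J :: ('i,'f) mat set)"
    unfolding blockwise_UR_block[OF assms(1)] \<pi>_def by (rule UT_mono) blast
  moreover have "UT I (\<pi> \<inter> (I - J) \<times> (I - J)) \<subseteq> (blockwise_UR U :: ('i,'f) mat set)"
    unfolding blockwise_UR_def \<pi>_def by (rule UT_mono) blast
  ultimately show ?thesis
    by blast
qed

lemma tensor_maps_Resf_blocks:
  fixes \<phi> :: "('i,'f::{field,finite}) mat \<Rightarrow> complex"
  assumes "set Js \<subseteq> set A" "sorted_wrt (\<lambda>X Y. X \<inter> Y = {}) Js" "h \<in> blockwise_UP"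
  shows "tensor_maps (blockwise_Resf Js) \<phi> h
    = average (blockwise_UR (\<Union>(set Js))) (\<lambda>X. \<phi> (mmul I h X))"
  using assms
proof (induction Js arbitrary: h)
  case Nil
  then show ?case
    using mmul_one_mat_right[OF finite_I UT_imp_mat_on[OF Nil.prems(3)[unfolded blockwise_UP_def]]]
    by (simp add: tensor_maps_Nil blockwise_UR_empty average_singleton)
next
  case (Cons J Js)
  let ?U = "\<Union>(set Js)"
  have J: "J \<in> set A" "J \<inter> ?U = {}"
    using Cons.prems(1,2) by auto
  have "tensor_maps (blockwise_Resf (J # Js)) \<phi> h
      = average (blockwise_UR J)
          (\<lambda>Y. tensor_maps (blockwise_Resf Js) \<phi> (mmul I h Y))"
    using Cons.prems(3) J(1) by (simp add: tensor_maps_Cons blk_apply_Resf)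
  also have "\<dots> = average (blockwise_UR J) (\<lambda>Y. average (blockwise_UR ?U) (\<lambda>Z. \<phi> (mmul I (mmul I h Y) Z)))"
  proof (rule average_cong)
    fix Y :: "('i,'f) mat"
    assume "Y \<in> blockwise_UR J"
    then have "mmul I h Y \<in> blockwise_UP"
      using mat_groupD(4)[OF mat_group_blockwise_UP Cons.prems(3)] blockwise_UR_subset_UP by blast
    then show "tensor_maps (blockwise_Resf Js) \<phi> (mmul I h Y)
        = average (blockwise_UR ?U) (\<lambda>Z. \<phi> (mmul I (mmul I h Y) Z))"
      using Cons.IH Cons.prems(1,2) by simp
  qed
  also have "\<dots> = average (blockwise_UR (J \<union> ?U)) (\<lambda>X. \<phi> (mmul I h X))"
    unfolding mmul_assoc
    by (rule average_mmul_factor[OF finite_I mat_group_blockwise_UR mat_group_blockwise_UR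
          mat_group_blockwise_UR blockwise_UR_mono blockwise_UR_mono ballI[OF blockwise_UR_Un_factor[OF J]]])
      auto
  finally show ?case
    by simp
qed

lemma UR_rel_B_comp_Asc_A:
  assumes "(i,k) \<in> UR_rel B \<inter> Eq A" "(k,j) \<in> UR_rel B" "(i,j) \<notin> Eq A"
  shows "(i,j) \<in> \<tau> \<inter> Asc A"
proof -
  have ik: "(i,k) \<in> \<tau>" "i \<in> I" "k \<in> I" "block_index A i = block_index A k"
    using assms(1) Id_on_subset_tau by (auto simp: Eq_A_iff)
  have kj: "(k,j) \<in> \<tau>" "j \<in> I" "block_index B k < block_index B j"
    using assms(2,3) ik by (auto simp: Asc_B_iff Eq_A_iff)
  have "block_index A i \<noteq> block_index A j"
    using assms(3) ik(2) kj(2) by (simp add: Eq_A_iff)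
  then have "block_index A i < block_index A j"
    using block_index_mono[OF ik(3) kj(2)] kj(3) ik(4) by linarith
  then show ?thesis
    using trans_tau ik(1) kj(1) ik(2) kj(2) by (auto simp: Asc_A_iff dest: transD)
qed

lemma mat_part_Eq_A_in_blockwise_UR:
  assumes "W \<in> UR I \<tau> B"
  shows "mat_part (Eq A) W \<in> (blockwise_UR I :: ('i,'f::{field,finite}) mat set)"
  unfolding blockwise_UR_def UT_iff
proof (intro conjI allI impI)
  have "UR_rel B \<subseteq> Eq A \<union> Asc A"
    using Id_on_subset_Eq[OF composition_A] Asc_B_subset_Eq_Un_Asc_A by blast
  then have "W \<in> UT I (Eq A \<union> Asc A)"
    using assms UT_mono unfolding UR_def by blast
  moreover have "(i,k) \<in> Eq A \<union> Asc A \<Longrightarrow> (k,j) \<in> Eq A \<union> Asc A \<Longrightarrow> (i,j) \<in> Eq A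
      \<Longrightarrow> (i,k) \<in> Eq A \<and> (k,j) \<in> Eq A" for i j k
    by (auto simp: Eq_A_iff Asc_A_iff)
  ultimately show "mat_part (Eq A) W \<in> GL I"
    using mat_part_in_GL[OF finite_I Id_on_subset_Eq[OF composition_A] _ trans_Eq[OF composition_A]
        trans_Eq_Un_Asc[OF composition_A]] by blast
  fix i j
  assume ij: "(i,j) \<notin> UR_rel B \<inter> Eq A \<inter> I \<times> I"
  show "mat_part (Eq A) W i j = one_mat I i j"
  proof (cases "(i,j) \<in> Eq A")
    case True
    then show ?thesis
      using ij UT_entry[OF assms[unfolded UR_def]] by (auto simp: mat_part_def Eq_A_iff)
  next
    case False
    then show ?thesis
      using Id_on_subset_Eq[OF composition_A] by (auto simp: mat_part_def one_mat_def)
  qed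
qed

text \<open>Levi decomposition: UR(\<tau>,B) = (UR(\<tau>,B) \<inter> UL(\<tau>,A)) UR(\<tau>,A), where the first factor of W is
  its block diagonal part with respect to A.\<close>

lemma UR_B_factor:
  fixes W :: "('i,'f::{field,finite}) mat"
  assumes W: "W \<in> UR I \<tau> B"
  shows "\<exists>X\<in>blockwise_UR I. \<exists>Y\<in>UR I \<tau> A. W = mmul I X Y"
proof -
  define X where "X = mat_part (Eq A) W"
  have X: "X \<in> blockwise_UR I"
    unfolding X_def using mat_part_Eq_A_in_blockwise_UR[OF W] .
  obtain Z where Z: "Z \<in> blockwise_UR I" "mmul I X Z = one_mat I" "mmul I Z X = one_mat I"
    using mat_group_inverse[OF finite_I mat_group_blockwise_UR X] by blast
  have W': "W \<in> UT I (UR_rel B)"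
    using W by (simp add: UR_def)
  have Z': "Z \<in> UT I (UR_rel B \<inter> Eq A \<inter> I \<times> I)"
    using Z(1) by (simp add: blockwise_UR_def)
  have Id: "Id_on I \<subseteq> UR_rel B \<inter> Eq A \<inter> I \<times> I"
    using Id_on_subset_Eq[OF composition_A] by blast
  define Y where "Y = mmul I Z W"
  have "W = mmul I (mmul I X Z) W"
    using Z(2) mmul_one_mat_left[OF finite_I UT_imp_mat_on[OF W']] by simp
  then have "W = mmul I X Y"
    by (simp add: Y_def mmul_assoc)
  moreover have "Y \<in> UR I \<tau> A"
    unfolding UR_def UT_iff
  proof (intro conjI allI impI)
    show "Y \<in> GL I"
      unfolding Y_def by (intro mmul_in_GL[OF finite_I] UT_imp_GL[OF Z'] UT_imp_GL[OF W'])
    fix i j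
    assume ij: "(i,j) \<notin> UR_rel A"
    show "Y i j = one_mat I i j"
    proof (cases "(i,j) \<in> Eq A")
      case True
      have same: "Z i k * W k j = Z i k * X k j" for k
      proof (cases "Z i k = 0")
        case False
        then have "(i,k) \<in> Eq A"
          using UT_entry_nonzero[OF Z' Id] by blast
        then have "(k,j) \<in> Eq A"
          using True by (auto simp: Eq_A_iff)
        then show ?thesis
          by (simp add: X_def mat_part_def)
      qed simp
      have "Y i j = mmul I Z X i j"
        by (simp only: Y_def mmul_def same)
      then show ?thesis
        using Z(3) by simp
    next
      case False
      have zero: "Z i k * W k j = 0" for k
        using UR_rel_B_comp_Asc_A[of i k j] UT_entry_nonzero[OF Z' Id, of i k] UT_entry_nonzero[OF W' _, of k j]
          False ij by auto
      have "Y i j = 0"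
        by (simp only: Y_def mmul_def zero sum.neutral_const)
      then show ?thesis
        using False Id_on_subset_Eq[OF composition_A] by (auto simp: one_mat_def)
    qed
  qed
  ultimately show ?thesis
    using X by blast
qed

lemma UL_B_subset: "UL I \<tau> B \<subseteq> blockwise_UP" "UL I \<tau> B \<subseteq> UP I \<tau> B"
  unfolding UL_def blockwise_UP_def UP_def using Eq_B_subset_Eq_A by (intro UT_mono; blast)+

lemma tensor_maps_Resf_eq_Resf:
  fixes \<psi> :: "('i,'f::{field,finite}) mat \<Rightarrow> complex"
  assumes "h \<in> UL I \<tau> B"
  shows "tensor_maps (blockwise_Resf A) (Resf I \<tau> A \<psi>) h = Resf I \<tau> B \<psi> h"
proof -
  have h: "h \<in> blockwise_UP"
    using UL_B_subset(1) assms by blast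
  have "tensor_maps (blockwise_Resf A) (Resf I \<tau> A \<psi>) h
      = average (blockwise_UR I) (\<lambda>X. Resf I \<tau> A \<psi> (mmul I h X))"
    using tensor_maps_Resf_blocks[OF order.refl set_composition_sorted_wrt_disjoint[OF composition_A] h]
    unfolding set_composition_Union[OF composition_A] .
  also have "\<dots> = average (blockwise_UR I) (\<lambda>X. average (UR I \<tau> A) (\<lambda>Y. \<psi> (mmul I (mmul I h X) Y)))"
  proof (rule average_cong)
    fix X :: "('i,'f) mat"
    assume "X \<in> blockwise_UR I"
    moreover have "blockwise_UP \<subseteq> UP I \<tau> A"
      unfolding blockwise_UP_def UP_def by (rule UT_mono) blast
    ultimately have "mmul I h X \<in> UP I \<tau> A"
      using mat_groupD(4)[OF mat_group_blockwise_UP h] blockwise_UR_subset_UP by blast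
    then show "Resf I \<tau> A \<psi> (mmul I h X) = average (UR I \<tau> A) (\<lambda>Y. \<psi> (mmul I (mmul I h X) Y))"
      by (rule Resf_composition_eq_average[OF composition_A])
  qed
  also have "\<dots> = average (UR I \<tau> B) (\<lambda>W. \<psi> (mmul I h W))"
    unfolding mmul_assoc
  proof (rule average_mmul_factor[OF finite_I mat_group_UR[OF composition_B] mat_group_blockwise_UR
        mat_group_UR[OF composition_A] _ _ ballI[OF UR_B_factor]])
    show "blockwise_UR I \<subseteq> (UR I \<tau> B :: ('i,'f) mat set)" "UR I \<tau> A \<subseteq> (UR I \<tau> B :: ('i,'f) mat set)"
      unfolding blockwise_UR_def UR_def using Asc_A_subset_Asc_B by (intro UT_mono; blast)+
  qed
  also have "\<dots> = Resf I \<tau> B \<psi> h"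
    by (rule Resf_composition_eq_average[OF composition_B, symmetric]) (use UL_B_subset(2) assms in blast)
  finally show ?thesis .
qed

end

theorem proposition4p8:
  fixes I :: "'i set" and \<tau> :: "('i \<times> 'i) set" and A B :: "'i set list"
    and \<psi> :: "('i,'f::{field,finite}) mat \<Rightarrow> complex"
  assumes "finite I"
    and "total_order_of I \<tau>"
    and "set_composition I A"
    and "set_composition I B"
    and "refines B A"
    and "class_fun I (UT I \<tau>) \<psi>"
  shows "\<forall>h \<in> UL I \<tau> B.
     (tensor_maps (map (\<lambda>Ar. (Ar, Resf Ar (rel_restr \<tau> Ar) (comp_restr B Ar))) A)
        (Resf I \<tau> A \<psi>)) h
     = Resf I \<tau> B \<psi> h"
proof -
  interpret composition_refinement I \<tau> A B
    using assms(1-5) by unfold_locales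
  txt \<open>The identity holds for every function \<psi>.\<close>
  show ?thesis
    using tensor_maps_Resf_eq_Resf by blast
qed

end
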